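(* Let $k\le n$ be positive integers, $x^*\in\mathbb{R}^n$ with support $S^*$, $|S^*|\le k$, $\mathcal{X}^0\in\mathbb{R}^n$ and $\eta>0$. Consider the oracle sequence $(S^t,u^t,\mathcal{X}^t)_{t\ge0}$ and the counts $c^t_i$ defined below. For all $i\in S^*$ and all integers $t\ge1$, $$c^t_i\le\frac{2\|\mathcal{X}^0\|_\infty}{\eta|x^*_i|}+1.$$
   Context: $S^*=\{i:x^*_i\neq0\}$. For $v\in\mathbb{R}^n$, $\mathrm{largest}_k(v)$ is the set of indices of the $k$ entries of $v$ with largest absolute value (ties broken by selecting the highest indices). The oracle sequence is defined for all $t\ge0$ by $S^t=\mathrm{largest}_k(\mathcal{X}^t)$, $u^t_i=-\eta x^*_i$ if $i\in S^*\setminus S^t$ and $u^t_i=0$ otherwise, and $\mathcal{X}^{t+1}=\mathcal{X}^t-u^t$. For $i\in\{1,\dots,n\}$, $c^0_i=0$ and, for $t\ge1$, $c^t_i=|\{t'\in\{0,\dots,t-1\}: i\in S^*\setminus S^{t'}\}|$. *)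

theory Defs
  imports Complex_Main
begin

text \<open>Vectors in R^n are functions nat => real; only the coordinates 1..n matter.\<close>

definition beats :: "(nat \<Rightarrow> real) \<Rightarrow> nat \<Rightarrow> nat \<Rightarrow> bool" where
  "beats v j i \<longleftrightarrow> \<bar>v j\<bar> > \<bar>v i\<bar> \<or> (\<bar>v j\<bar> = \<bar>v i\<bar> \<and> j > i)"

text \<open>largest_k v: the k indices in 1..n of largest absolute value (ties: highest indices).\<close>
definition largest :: "nat \<Rightarrow> nat \<Rightarrow> (nat \<Rightarrow> real) \<Rightarrow> nat set" where
  "largest n k v = {i \<in> {1..n}. card {j \<in> {1..n}. beats v j i} < k}"

definition supp :: "nat \<Rightarrow> (nat \<Rightarrow> real) \<Rightarrow> nat set" where
  "supp n x = {i \<in> {1..n}. x i \<noteq> 0}"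

definition norm_inf :: "nat \<Rightarrow> (nat \<Rightarrow> real) \<Rightarrow> real" where
  "norm_inf n x = Max ((\<lambda>i. \<bar>x i\<bar>) ` {1..n})"

definition oracle_u :: "nat \<Rightarrow> real \<Rightarrow> (nat \<Rightarrow> real) \<Rightarrow> nat set \<Rightarrow> nat \<Rightarrow> real" where
  "oracle_u n \<eta> xs S i = (if i \<in> supp n xs - S then - \<eta> * xs i else 0)"

fun oracle_X :: "nat \<Rightarrow> nat \<Rightarrow> real \<Rightarrow> (nat \<Rightarrow> real) \<Rightarrow> (nat \<Rightarrow> real) \<Rightarrow> nat \<Rightarrow> (nat \<Rightarrow> real)" where
  "oracle_X n k \<eta> xs X0 0 = X0"
| "oracle_X n k \<eta> xs X0 (Suc t) =
     (\<lambda>i. oracle_X n k \<eta> xs X0 t i - oracle_u n \<eta> xs (largest n k (oracle_X n k \<eta> xs X0 t)) i)"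

definition oracle_S :: "nat \<Rightarrow> nat \<Rightarrow> real \<Rightarrow> (nat \<Rightarrow> real) \<Rightarrow> (nat \<Rightarrow> real) \<Rightarrow> nat \<Rightarrow> nat set" where
  "oracle_S n k \<eta> xs X0 t = largest n k (oracle_X n k \<eta> xs X0 t)"

definition oracle_c :: "nat \<Rightarrow> nat \<Rightarrow> real \<Rightarrow> (nat \<Rightarrow> real) \<Rightarrow> (nat \<Rightarrow> real) \<Rightarrow> nat \<Rightarrow> nat \<Rightarrow> nat" where
  "oracle_c n k \<eta> xs X0 t i = card {t' \<in> {0..<t}. i \<in> supp n xs - oracle_S n k \<eta> xs X0 t'}"

end

theory Submission
  imports Defs
begin

text \<open>
  Coordinatewise, the oracle iterate is \<open>X\<^sup>t\<^sub>i = X\<^sup>0\<^sub>i + \<eta> x\<^sup>*\<^sub>i c\<^sup>t\<^sub>i\<close>; in particular it never moves off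
  the support. If \<open>i \<in> S\<^sup>*\<close> is missed by \<open>S\<^sup>t\<close>, then at least \<open>k \<ge> |S\<^sup>*|\<close> indices beat \<open>i\<close>, so one
  of them, \<open>j\<close>, lies off the support and
  \<open>|X\<^sup>0\<^sub>i + \<eta> x\<^sup>*\<^sub>i c\<^sup>t\<^sub>i| \<le> |X\<^sup>t\<^sub>j| = |X\<^sup>0\<^sub>j| \<le> \<parallel>X\<^sup>0\<parallel>\<^sub>\<infinity>\<close>, whence \<open>\<eta> |x\<^sup>*\<^sub>i| c\<^sup>t\<^sub>i \<le> 2 \<parallel>X\<^sup>0\<parallel>\<^sub>\<infinity>\<close>.
  The counter \<open>c\<^sub>i\<close> only increases at such steps, so it exceeds this bound by at most one.
\<close>

lemma card_filter_lessThan_Suc: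
  "card {s \<in> {0..<Suc t}. P s} = card {s \<in> {0..<t}. P s} + (if P t then 1 else 0)"
proof -
  have "{s \<in> {0..<Suc t}. P s} = (if P t then insert t {s \<in> {0..<t}. P s} else {s \<in> {0..<t}. P s})"
    by (auto simp: less_Suc_eq)
  then show ?thesis by simp
qed

lemma card_filter_lessThan_le_bound_plus_one:
  fixes B :: real and t :: nat
  assumes "0 \<le> B" and "\<And>s. P s \<Longrightarrow> real (card {r \<in> {0..<s}. P r}) \<le> B"
  shows "real (card {s \<in> {0..<t}. P s}) \<le> B + 1"
proof (induction t)
  case 0
  then show ?case using assms(1) by simp
next
  case (Suc t)
  then show ?case
    unfolding card_filter_lessThan_Suc using assms(2)[of t] by (cases "P t") simp_all
qed

lemma beats_irrefl: "\<not> beats v i i"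
  unfolding beats_def by simp

lemma beats_abs_le: "beats v j i \<Longrightarrow> \<bar>v i\<bar> \<le> \<bar>v j\<bar>"
  unfolding beats_def by auto

lemma not_in_largest_beaten_outside:
  assumes "finite A" and "card A \<le> k" and "i \<in> A" and "i \<in> {1..n}"
    and "i \<notin> largest n k v"
  shows "\<exists>j\<in>{1..n} - A. beats v j i"
proof (rule ccontr)
  assume "\<not> ?thesis"
  then have "{j \<in> {1..n}. beats v j i} \<subseteq> A - {i}"
    using beats_irrefl by blast
  then have "card {j \<in> {1..n}. beats v j i} \<le> card (A - {i})"
    using assms(1) by (intro card_mono) auto
  also have "\<dots> < card A"
    using assms(1,3) by (rule card_Diff1_less)
  finally have "card {j \<in> {1..n}. beats v j i} < card A" .
  moreover have "k \<le> card {j \<in> {1..n}. beats v j i}"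
    using assms(4,5) unfolding largest_def by auto
  ultimately show False using assms(2) by linarith
qed

lemma finite_supp: "finite (supp n x)"
  unfolding supp_def by simp

lemma abs_le_norm_inf: "j \<in> {1..n} \<Longrightarrow> \<bar>x j\<bar> \<le> norm_inf n x"
  unfolding norm_inf_def by (rule Max_ge) auto

lemma oracle_c_Suc:
  "oracle_c n k \<eta> xs X0 (Suc t) i = oracle_c n k \<eta> xs X0 t i +
     (if i \<in> supp n xs - oracle_S n k \<eta> xs X0 t then 1 else 0)"
  unfolding oracle_c_def by (rule card_filter_lessThan_Suc)

lemma oracle_X_eq:
  "oracle_X n k \<eta> xs X0 t i = X0 i + \<eta> * xs i * real (oracle_c n k \<eta> xs X0 t i)"
proof (induction t)
  case 0
  then show ?case by (simp add: oracle_c_def)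
next
  case (Suc t)
  then show ?case
    by (simp add: oracle_c_Suc oracle_u_def oracle_S_def algebra_simps)
qed

lemma oracle_c_outside_supp: "j \<notin> supp n xs \<Longrightarrow> oracle_c n k \<eta> xs X0 t j = 0"
  unfolding oracle_c_def by simp

lemma oracle_X_outside_supp: "j \<notin> supp n xs \<Longrightarrow> oracle_X n k \<eta> xs X0 t j = X0 j"
  by (simp add: oracle_X_eq oracle_c_outside_supp)

lemma oracle_c_bound_when_missed:
  assumes "card (supp n xs) \<le> k" and "\<eta> > 0" and "i \<in> supp n xs"
    and "i \<notin> oracle_S n k \<eta> xs X0 t"
  shows "\<eta> * \<bar>xs i\<bar> * real (oracle_c n k \<eta> xs X0 t i) \<le> 2 * norm_inf n X0"
proof -
  let ?X = "oracle_X n k \<eta> xs X0 t"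
  have i: "i \<in> {1..n}" using assms(3) unfolding supp_def by simp
  obtain j where j: "j \<in> {1..n}" "j \<notin> supp n xs" "beats ?X j i"
    using not_in_largest_beaten_outside[OF finite_supp assms(1,3) i] assms(4)
    unfolding oracle_S_def by blast
  have "\<bar>X0 i + \<eta> * xs i * real (oracle_c n k \<eta> xs X0 t i)\<bar> \<le> norm_inf n X0"
    using beats_abs_le[OF j(3)] abs_le_norm_inf[OF j(1), of X0]
    by (simp add: oracle_X_eq[symmetric] oracle_X_outside_supp[OF j(2)])
  moreover have "\<bar>X0 i\<bar> \<le> norm_inf n X0" using abs_le_norm_inf[OF i] .
  moreover have "\<bar>\<eta> * xs i * real (oracle_c n k \<eta> xs X0 t i)\<bar>
      = \<eta> * \<bar>xs i\<bar> * real (oracle_c n k \<eta> xs X0 t i)"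
    using assms(2) by (simp add: abs_mult)
  ultimately show ?thesis by linarith
qed

theorem lemmaC3:
  fixes n k :: nat and xs X0 :: "nat \<Rightarrow> real" and \<eta> :: real and i t :: nat
  assumes "0 < k" and "k \<le> n"
    and "card (supp n xs) \<le> k"
    and "\<eta> > 0"
    and "i \<in> supp n xs"
    and "t \<ge> 1"
  shows "real (oracle_c n k \<eta> xs X0 t i) \<le> 2 * norm_inf n X0 / (\<eta> * \<bar>xs i\<bar>) + 1"
proof -
  have i: "i \<in> {1..n}" and scale: "\<eta> * \<bar>xs i\<bar> > 0"
    using assms(4,5) unfolding supp_def by auto
  have "0 \<le> 2 * norm_inf n X0 / (\<eta> * \<bar>xs i\<bar>)"
    using abs_le_norm_inf[OF i, of X0] scale by simp
  moreover have "real (oracle_c n k \<eta> xs X0 s i) \<le> 2 * norm_inf n X0 / (\<eta> * \<bar>xs i\<bar>)"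
    if "i \<notin> oracle_S n k \<eta> xs X0 s" for s
    using oracle_c_bound_when_missed[OF assms(3,4,5) that] scale
    by (simp add: pos_le_divide_eq mult.commute)
  ultimately show ?thesis
    unfolding oracle_c_def
    by (intro card_filter_lessThan_le_bound_plus_one) (auto simp: assms(5) oracle_c_def)
qed

end
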